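(* Let $g\ge 3$ and let $(\alpha,\beta)$ be a coherent minimally intersecting filling pair on $S_g$, so $i(\alpha,\beta)=2g-1$. Let $P$ be the $4(2g-1)$-gon obtained by cutting $S_g$ along $\alpha\cup\beta$, and let $a_1,\dots,a_{2(2g-1)}$ be its $\alpha$-sides in cyclic clockwise order. Then there exists an index $i$ such that $a_i$ is not glued to its opposite side $a_{i+(2g-1)}$ (indices taken mod $2(2g-1)$). The same statement holds with $\beta$ in place of $\alpha$.
   Context: $S_g$ is the closed orientable surface of genus $g$. A filling pair is a pair of simple closed curves in minimal position whose complement is a union of open disks. It is minimally intersecting if $i(\alpha,\beta)$ is minimal among filling pairs on $S_g$; for $g\ge 3$ this minimum is $2g-1$. It is coherent if the absolute value of the algebraic intersection number equals the geometric intersection number $i(\alpha,\beta)$. For such a pair with $g\ge3$, the complement $S_g\setminus(\alpha\cup\beta)$ is a single open disk. Its closure is a $4(2g-1)$-gon $P$ whose sides alternate between subarcs of $\alpha$ and subarcs of $\beta$ (subarcs run between consecutive intersection points). Each of the $2g-1$ subarcs of $\alpha$, and each of the $2g-1$ subarcs of $\beta$, appears as exactly two sides of $P$, and $S_g$ is recovered by gluing these pairs of sides. The opposite of the $\alpha$-side $a_i$ is the $\alpha$-side $a_{i+(2g-1)}$. *)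

theory Defs
  imports Main
begin

text \<open>
Combinatorial model of a filling pair (alpha, beta) on a closed oriented surface
whose complement is a single open disk.

The union alpha \<union> beta is a 4-valent graph embedded in the surface with
n = i(alpha,beta) vertices (the intersection points) and 2n edges (the subarcs).
We label the intersection points 0,...,n-1 in the order alpha traverses them, so
the alpha-subarc k runs from point k to point (k+1) mod n.  beta traverses them
in the order sg 0, sg 1, ..., sg (n-1), so the beta-subarc j runs from point sg j
to point sg ((j+1) mod n); sg is a bijection of {..<n}.  The sign of the
intersection at point v (with respect to the orientation of the surface) is
recorded by eps v.  The embedding of the graph in the oriented surface is
given by the rotation system (cyclic order of the four half-edges around each
vertex) determined by these signs, and the complementary regions are the orbits
of the face-tracing permutation (standard ribbon-graph / rotation system theory).
\<close>

datatype curve = Alpha | Beta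

text \<open>A dart (oriented subarc): curve, index of the subarc, True = traversed in the
direction of the curve.\<close>
type_synonym dart = "curve \<times> nat \<times> bool"

definition darts :: "nat \<Rightarrow> dart set" where
  "darts n = {d. fst (snd d) < n}"

definition reverse_dart :: "dart \<Rightarrow> dart" where
  "reverse_dart d = (fst d, fst (snd d), \<not> snd (snd d))"

definition edge_of :: "dart \<Rightarrow> curve \<times> nat" where
  "edge_of d = (fst d, fst (snd d))"

definition alpha_out_fwd :: "nat \<Rightarrow> nat \<Rightarrow> dart" where
  "alpha_out_fwd n v = (Alpha, v, True)"
definition alpha_out_bwd :: "nat \<Rightarrow> nat \<Rightarrow> dart" where
  "alpha_out_bwd n v = (Alpha, (v + n - 1) mod n, False)"
definition beta_out_fwd :: "nat \<Rightarrow> (nat \<Rightarrow> nat) \<Rightarrow> nat \<Rightarrow> dart" where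
  "beta_out_fwd n sg v = (Beta, the_inv_into {..<n} sg v, True)"
definition beta_out_bwd :: "nat \<Rightarrow> (nat \<Rightarrow> nat) \<Rightarrow> nat \<Rightarrow> dart" where
  "beta_out_bwd n sg v = (Beta, (the_inv_into {..<n} sg v + n - 1) mod n, False)"

text \<open>Rotation: the next outgoing dart (counterclockwise) around the tail vertex.
At a positive crossing the cyclic order is alpha-fwd, beta-fwd, alpha-bwd, beta-bwd;
at a negative crossing it is alpha-fwd, beta-bwd, alpha-bwd, beta-fwd.\<close>
fun rot :: "nat \<Rightarrow> (nat \<Rightarrow> nat) \<Rightarrow> (nat \<Rightarrow> bool) \<Rightarrow> dart \<Rightarrow> dart" where
  "rot n sg eps (Alpha, k, True) =
     (let v = k in if eps v then beta_out_fwd n sg v else beta_out_bwd n sg v)"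
| "rot n sg eps (Beta, j, True) =
     (let v = sg j in if eps v then alpha_out_bwd n v else alpha_out_fwd n v)"
| "rot n sg eps (Alpha, k, False) =
     (let v = Suc k mod n in if eps v then beta_out_bwd n sg v else beta_out_fwd n sg v)"
| "rot n sg eps (Beta, j, False) =
     (let v = sg (Suc j mod n) in if eps v then alpha_out_fwd n v else alpha_out_bwd n v)"

text \<open>Face-tracing permutation; its orbits are the boundary walks of the
complementary regions.  Consecutive darts in a face alternate between alpha and beta.\<close>
definition face_step :: "nat \<Rightarrow> (nat \<Rightarrow> nat) \<Rightarrow> (nat \<Rightarrow> bool) \<Rightarrow> dart \<Rightarrow> dart" where
  "face_step n sg eps d = rot n sg eps (reverse_dart d)"

text \<open>The complement of alpha \<union> beta is a single disk: one face orbit containing all darts.\<close>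
definition single_face :: "nat \<Rightarrow> (nat \<Rightarrow> nat) \<Rightarrow> (nat \<Rightarrow> bool) \<Rightarrow> bool" where
  "single_face n sg eps \<longleftrightarrow>
     darts n = range (\<lambda>m. (face_step n sg eps ^^ m) (Alpha, 0, True))"

definition alg_int :: "nat \<Rightarrow> (nat \<Rightarrow> bool) \<Rightarrow> int" where
  "alg_int n eps = (\<Sum>v<n. if eps v then 1 else -1)"

definition coherent :: "nat \<Rightarrow> (nat \<Rightarrow> bool) \<Rightarrow> bool" where
  "coherent n eps \<longleftrightarrow> \<bar>alg_int n eps\<bar> = int n"

text \<open>The i-th side of curve c of the polygon P (i = 0,1,...,2n-1 in cyclic order
along the boundary of P), starting from the c-subarc 0 traversed forwards.\<close>
definition side :: "nat \<Rightarrow> (nat \<Rightarrow> nat) \<Rightarrow> (nat \<Rightarrow> bool) \<Rightarrow> curve \<Rightarrow> nat \<Rightarrow> dart" where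
  "side n sg eps c i = (face_step n sg eps ^^ (2 * i)) (c, 0, True)"

definition glued_to_opposite :: "nat \<Rightarrow> (nat \<Rightarrow> nat) \<Rightarrow> (nat \<Rightarrow> bool) \<Rightarrow> curve \<Rightarrow> nat \<Rightarrow> bool" where
  "glued_to_opposite n sg eps c i \<longleftrightarrow>
     edge_of (side n sg eps c i) = edge_of (side n sg eps c ((i + n) mod (2 * n)))"

end

(*
  Coherence forces all crossings to have the same sign, and then the face walk, read two
  steps at a time along the sides of one curve, alternates between forward and backward
  darts.  Since n is odd, side i and side i + n have opposite directions, so if every side
  were glued to its opposite, walking n sides ahead would reverse every dart and the double
  step would commute with reversal.  Computed explicitly, this says that the map r sending an
  intersection point to its neighbour along the other curve satisfies r (r k + 1) = k + 1
  (mod n).  Then r commutes with the shift by 2, which generates Z/n for odd n, so r is a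
  translation by some c with 2c = 0, i.e. the identity; but r has no fixed point.
*)

theory Submission
  imports Defs "HOL-Combinatorics.Orbits"
begin

lemma cyclic_on_funpow_card_self:
  assumes "cyclic_on f S" "s \<in> S"
  shows "(f ^^ card S) s = s"
proof -
  have orb: "S = orbit f s" using assms by (simp add: cyclic_on_alldef)
  with assms(2) have self: "s \<in> orbit f s" by simp
  have "card S = funpow_dist1 f s s"
    unfolding orb orbit_conv_funpow_dist1[OF self]
    using card_image[OF inj_on_funpow_dist1[OF self]] by simp
  then show ?thesis using funpow_dist1_prop[OF self] by simp
qed

lemma cyclic_on_range_funpow:
  assumes "finite S" "inj_on f S" "f ` S \<subseteq> S" and S: "S = range (\<lambda>m. (f ^^ m) x)"
  shows "cyclic_on f S"
proof (rule cyclic_on_singleI)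
  have "x = (f ^^ 0) x" by simp
  then show x: "x \<in> S" unfolding S by blast
  have "f ` S = S" using endo_inj_surj assms(1-3) by blast
  with x obtain m where "x = f ((f ^^ m) x)" unfolding S by blast
  then have self: "x \<in> orbit f x"
    unfolding orbit_altdef by (intro CollectI exI[of _ "Suc m"]) simp
  show "S = orbit f x" unfolding orbit_altdef_self_in[OF self] S by auto
qed

lemma Suc_pred_mod [simplified, simp]: "k < n \<Longrightarrow> Suc ((k + n - 1) mod n) mod n = (k::nat)"
  by (cases k) (simp_all add: mod_Suc_eq)

lemma pred_Suc_mod [simplified, simp]: "k < n \<Longrightarrow> (Suc k mod n + n - 1) mod n = (k::nat)"
  by (cases "Suc k < n") (auto simp: mod_Suc)

lemma mod_translation_of_step_two:
  fixes h :: "nat \<Rightarrow> nat"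
  assumes "odd n" and step: "\<And>k. k < n \<Longrightarrow> h ((k + 2) mod n) = (h k + 2) mod n"
    and "h 0 < n" "y < n"
  shows "h y = (h 0 + y) mod n"
proof -
  have n0: "0 < n" using \<open>odd n\<close> by (rule odd_pos)
  have even_steps: "h (2 * j mod n) = (h 0 + 2 * j) mod n" for j
  proof (induction j)
    case 0
    show ?case using \<open>h 0 < n\<close> by simp
  next
    case (Suc j)
    have "h (2 * Suc j mod n) = h ((2 * j mod n + 2) mod n)"
      unfolding mod_add_left_eq by simp
    also have "\<dots> = (h (2 * j mod n) + 2) mod n"
      using step n0 by simp
    also have "\<dots> = (h 0 + 2 * Suc j) mod n"
      unfolding Suc.IH mod_add_left_eq by simp
    finally show ?case .
  qed
  obtain m where m: "n = 2 * m + 1" using \<open>odd n\<close> by (rule oddE)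
  have double: "2 * (y * (m + 1)) = y + n * y" using m by (simp add: algebra_simps)
  have "h y = h (2 * (y * (m + 1)) mod n)"
    unfolding double using \<open>y < n\<close> by simp
  also have "\<dots> = (h 0 + 2 * (y * (m + 1))) mod n"
    by (rule even_steps)
  also have "\<dots> = (h 0 + y) mod n"
    unfolding double by (simp add: add.assoc[symmetric])
  finally show ?thesis .
qed

(* With T k = k + 1 the hypothesis reads r T r = T, hence r T\<^sup>2 = T\<^sup>2 r. *)
lemma shift_sandwich_imp_id:
  fixes r :: "nat \<Rightarrow> nat"
  assumes "odd n" and bound: "\<And>k. k < n \<Longrightarrow> r k < n"
    and sandwich: "\<And>k. k < n \<Longrightarrow> r (Suc (r k) mod n) = Suc k mod n"
    and "k < n"
  shows "r k = k"
proof -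
  have n0: "0 < n" using \<open>odd n\<close> by (rule odd_pos)
  have step: "r ((k + 2) mod n) = (r k + 2) mod n" if "k < n" for k
  proof -
    have "r (Suc (r (Suc (r k) mod n)) mod n) = Suc (Suc (r k) mod n) mod n"
      using sandwich n0 by simp
    then show ?thesis
      unfolding sandwich[OF that] by (simp add: mod_Suc_eq)
  qed
  have translation: "r y = (r 0 + y) mod n" if "y < n" for y
    using mod_translation_of_step_two[OF \<open>odd n\<close> step bound[OF n0] that] .
  have "(2 * r 0 + 1) mod n = (r 0 + Suc (r 0) mod n) mod n"
    unfolding mod_add_right_eq by (simp add: mult_2)
  also have "\<dots> = r (Suc (r 0) mod n)"
    by (rule translation[symmetric]) (simp add: n0)
  also have "\<dots> = 1 mod n"
    using sandwich[OF n0] by simp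
  finally have "n dvd 2 * r 0"
    using mod_eq_dvd_iff_nat[of 1 "2 * r 0 + 1" n] by simp
  then have "n dvd r 0"
    using \<open>odd n\<close> by (simp add: coprime_dvd_mult_right_iff)
  then have "r 0 = 0"
    using bound[OF n0] by (meson dvd_imp_le not_le neq0_conv)
  then show ?thesis
    using translation[OF \<open>k < n\<close>] \<open>k < n\<close> by simp
qed

definition inverse_perms :: "nat \<Rightarrow> (nat \<Rightarrow> nat) \<Rightarrow> (nat \<Rightarrow> nat) \<Rightarrow> bool" where
  "inverse_perms n \<phi> \<psi> \<longleftrightarrow> (\<forall>k<n. \<phi> k < n \<and> \<psi> k < n \<and> \<phi> (\<psi> k) = k \<and> \<psi> (\<phi> k) = k)"

lemma inverse_perms_the_inv_into:
  assumes "bij_betw \<sigma> {..<n} {..<n}"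
  shows "inverse_perms n \<sigma> (the_inv_into {..<n} \<sigma>)"
  using bij_betw_apply[OF assms] bij_betw_apply[OF bij_betw_the_inv_into[OF assms]]
  unfolding inverse_perms_def
  by (simp add: f_the_inv_into_f_bij_betw[OF assms] the_inv_into_f_f[OF bij_betw_imp_inj_on[OF assms]])

lemma inverse_perms_swap: "inverse_perms n \<phi> \<psi> \<Longrightarrow> inverse_perms n \<psi> \<phi>"
  unfolding inverse_perms_def by blast

(* For \<phi> = sg and \<psi> its inverse, conj_succ moves an intersection point to the next one
   along beta; with the roles swapped it moves along alpha. *)
definition conj_succ :: "nat \<Rightarrow> (nat \<Rightarrow> nat) \<Rightarrow> (nat \<Rightarrow> nat) \<Rightarrow> nat \<Rightarrow> nat" where
  "conj_succ n \<phi> \<psi> k = \<phi> (Suc (\<psi> k) mod n)"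

definition conj_pred :: "nat \<Rightarrow> (nat \<Rightarrow> nat) \<Rightarrow> (nat \<Rightarrow> nat) \<Rightarrow> nat \<Rightarrow> nat" where
  "conj_pred n \<phi> \<psi> k = \<phi> ((\<psi> k + n - 1) mod n)"

lemma inverse_perms_conj_succ_pred:
  assumes "inverse_perms n \<phi> \<psi>"
  shows "inverse_perms n (conj_succ n \<phi> \<psi>) (conj_pred n \<phi> \<psi>)"
  using assms unfolding inverse_perms_def conj_succ_def conj_pred_def by auto

lemma conj_succ_pred_no_fixpoint:
  assumes "inverse_perms n \<phi> \<psi>" "1 < n" "k < n"
  shows "conj_succ n \<phi> \<psi> k \<noteq> k" "conj_pred n \<phi> \<psi> k \<noteq> k"
proof -
  have k: "\<psi> k < n" "\<psi> (\<phi> (Suc (\<psi> k) mod n)) = Suc (\<psi> k) mod n"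
    "\<psi> (\<phi> ((\<psi> k + n - 1) mod n)) = (\<psi> k + n - 1) mod n"
    using assms by (simp_all add: inverse_perms_def)
  have succ: "Suc (\<psi> k) mod n \<noteq> \<psi> k"
    using assms(2) k(1) by (auto simp: mod_Suc)
  moreover have "(\<psi> k + n - 1) mod n \<noteq> \<psi> k"
  proof
    assume "(\<psi> k + n - 1) mod n = \<psi> k"
    then have "Suc (\<psi> k) mod n = \<psi> k" using Suc_pred_mod[of "\<psi> k" n] k(1) by simp
    with succ show False ..
  qed
  ultimately show "conj_succ n \<phi> \<psi> k \<noteq> k" "conj_pred n \<phi> \<psi> k \<noteq> k"
    unfolding conj_succ_def conj_pred_def using k by metis+
qed

lemmas out_dart_defs = alpha_out_fwd_def alpha_out_bwd_def beta_out_fwd_def beta_out_bwd_def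

lemma darts_eq: "darts n = {Alpha, Beta} \<times> {..<n} \<times> UNIV"
proof -
  have "(UNIV :: curve set) = {Alpha, Beta}"
    by (metis UNIV_eq_I curve.exhaust insertCI)
  then show ?thesis by (auto simp: darts_def)
qed

lemma finite_darts: "finite (darts n)"
  by (simp add: darts_eq)

lemma card_darts: "card (darts n) = 4 * n"
  by (simp add: darts_eq card_cartesian_product)

fun rot_inv :: "nat \<Rightarrow> (nat \<Rightarrow> nat) \<Rightarrow> (nat \<Rightarrow> bool) \<Rightarrow> dart \<Rightarrow> dart" where
  "rot_inv n sg eps (Alpha, k, True) =
     (let v = k in if eps v then beta_out_bwd n sg v else beta_out_fwd n sg v)"
| "rot_inv n sg eps (Beta, j, True) =
     (let v = sg j in if eps v then alpha_out_fwd n v else alpha_out_bwd n v)"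
| "rot_inv n sg eps (Alpha, k, False) =
     (let v = Suc k mod n in if eps v then beta_out_fwd n sg v else beta_out_bwd n sg v)"
| "rot_inv n sg eps (Beta, j, False) =
     (let v = sg (Suc j mod n) in if eps v then alpha_out_bwd n v else alpha_out_fwd n v)"

lemma rot_inv_rot:
  assumes "bij_betw sg {..<n} {..<n}" "d \<in> darts n"
  shows "rot_inv n sg eps (rot n sg eps d) = d"
proof -
  have "inverse_perms n sg (the_inv_into {..<n} sg)"
    using assms(1) by (rule inverse_perms_the_inv_into)
  moreover obtain c k b where "d = (c, k, b)" "k < n"
    using assms(2) by (cases d) (auto simp: darts_def)
  ultimately show ?thesis
    by (cases c; cases b) (auto simp: inverse_perms_def Let_def out_dart_defs)
qed

lemma face_step_in_darts:
  assumes "bij_betw sg {..<n} {..<n}" "d \<in> darts n"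
  shows "face_step n sg eps d \<in> darts n"
proof -
  have "inverse_perms n sg (the_inv_into {..<n} sg)"
    using assms(1) by (rule inverse_perms_the_inv_into)
  moreover obtain c k b where "d = (c, k, b)" "k < n"
    using assms(2) by (cases d) (auto simp: darts_def)
  ultimately show ?thesis
    by (cases c; cases b) (auto simp: inverse_perms_def Let_def out_dart_defs darts_def
        face_step_def reverse_dart_def)
qed

lemma inj_on_face_step:
  assumes "bij_betw sg {..<n} {..<n}"
  shows "inj_on (face_step n sg eps) (darts n)"
proof (rule inj_on_inverseI)
  fix d assume "d \<in> darts n"
  then have "reverse_dart d \<in> darts n" by (simp add: darts_def reverse_dart_def)
  then show "reverse_dart (rot_inv n sg eps (face_step n sg eps d)) = d"
    using rot_inv_rot[OF assms] by (simp add: face_step_def reverse_dart_def)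
qed

lemma single_face_cyclic_on:
  assumes "bij_betw sg {..<n} {..<n}" "single_face n sg eps"
  shows "cyclic_on (face_step n sg eps) (darts n)"
proof (rule cyclic_on_range_funpow[OF finite_darts inj_on_face_step[OF assms(1)]])
  show "face_step n sg eps ` darts n \<subseteq> darts n"
    using face_step_in_darts[OF assms(1)] by blast
  show "darts n = range (\<lambda>m. (face_step n sg eps ^^ m) (Alpha, 0, True))"
    using assms(2) unfolding single_face_def .
qed

lemma fst_face_step: "fst (face_step n sg eps d) \<noteq> fst d"
proof -
  obtain c k b where "d = (c, k, b)" by (cases d)
  then show ?thesis
    by (cases c; cases b) (simp_all add: face_step_def reverse_dart_def Let_def out_dart_defs)
qed

lemma fst_funpow_face_step: "fst ((face_step n sg eps ^^ j) d) = fst d \<longleftrightarrow> even j"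
proof (induction j)
  case (Suc j)
  have "fst ((face_step n sg eps ^^ Suc j) d) \<noteq> fst ((face_step n sg eps ^^ j) d)"
    using fst_face_step by simp
  with Suc.IH show ?case
    by (cases "fst ((face_step n sg eps ^^ Suc j) d)"; cases "fst ((face_step n sg eps ^^ j) d)";
        cases "fst d") auto
qed simp

lemma single_face_funpow_period:
  assumes "bij_betw sg {..<n} {..<n}" "single_face n sg eps" "d \<in> darts n"
  shows "(face_step n sg eps ^^ (4 * n)) d = d"
  using cyclic_on_funpow_card_self[OF single_face_cyclic_on[OF assms(1,2)] assms(3)]
  by (simp add: card_darts)

lemma single_face_reaches_same_curve:
  assumes "bij_betw sg {..<n} {..<n}" "single_face n sg eps" "d \<in> darts n" "d' \<in> darts n"
    and "fst d' = fst d"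
  obtains i where "((face_step n sg eps ^^ 2) ^^ i) d = d'"
proof -
  have "d' \<in> orbit (face_step n sg eps) d"
    using single_face_cyclic_on[OF assms(1,2)] assms(3,4) by (auto simp: cyclic_on_alldef)
  then obtain j where j: "(face_step n sg eps ^^ j) d = d'"
    by (auto simp: orbit_altdef)
  then have "even j" using fst_funpow_face_step[of j n sg eps d] assms(5) by simp
  with j show thesis using that by (metis evenE funpow_mult)
qed

lemma face_step_positive:
  assumes "bij_betw sg {..<n} {..<n}" "\<forall>v<n. eps v" "k < n"
  defines "\<rho> \<equiv> the_inv_into {..<n} sg"
  shows "face_step n sg eps (Alpha, k, True) = (Beta, (\<rho> (Suc k mod n) + n - 1) mod n, False)"
    "face_step n sg eps (Alpha, k, False) = (Beta, \<rho> k, True)"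
    "face_step n sg eps (Beta, k, True) = (Alpha, sg (Suc k mod n), True)"
    "face_step n sg eps (Beta, k, False) = (Alpha, (sg k + n - 1) mod n, False)"
  using assms bij_betw_apply[OF assms(1)]
  by (simp_all add: face_step_def reverse_dart_def out_dart_defs)

lemma face_step_negative:
  assumes "bij_betw sg {..<n} {..<n}" "\<forall>v<n. \<not> eps v" "k < n"
  defines "\<rho> \<equiv> the_inv_into {..<n} sg"
  shows "face_step n sg eps (Alpha, k, True) = (Beta, \<rho> (Suc k mod n), True)"
    "face_step n sg eps (Alpha, k, False) = (Beta, (\<rho> k + n - 1) mod n, False)"
    "face_step n sg eps (Beta, k, True) = (Alpha, (sg (Suc k mod n) + n - 1) mod n, False)"
    "face_step n sg eps (Beta, k, False) = (Alpha, sg k, True)"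
  using assms bij_betw_apply[OF assms(1)]
  by (simp_all add: face_step_def reverse_dart_def out_dart_defs)

lemma twice_face_step_constant_sign:
  assumes bij: "bij_betw sg {..<n} {..<n}" and "1 < n"
    and sign: "(\<forall>v<n. eps v) \<or> (\<forall>v<n. \<not> eps v)"
  obtains r q where "inverse_perms n r q" "r 0 \<noteq> 0"
    "\<And>k. k < n \<Longrightarrow> (face_step n sg eps ^^ 2) (c, k, False) = (c, r k, True)"
    "\<And>k. k < n \<Longrightarrow> (face_step n sg eps ^^ 2) (c, k, True) = (c, (q (Suc k mod n) + n - 1) mod n, False)"
proof -
  define \<rho> where "\<rho> = the_inv_into {..<n} sg"
  have \<sigma>\<rho>: "inverse_perms n sg \<rho>"
    unfolding \<rho>_def using bij by (rule inverse_perms_the_inv_into)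
  then have \<rho>\<sigma>: "inverse_perms n \<rho> sg" by (rule inverse_perms_swap)
  have bounds: "sg k < n" "\<rho> k < n" if "k < n" for k
    using \<sigma>\<rho> that by (simp_all add: inverse_perms_def)
  have n0: "0 < n" using \<open>1 < n\<close> by simp
  note conj_perms = inverse_perms_conj_succ_pred inverse_perms_swap[OF inverse_perms_conj_succ_pred]
  note no_fixpoint = conj_succ_pred_no_fixpoint[OF _ \<open>1 < n\<close> n0, unfolded conj_succ_def conj_pred_def, simplified]
  note unfolds = numeral_2_eq_2 \<rho>_def[symmetric] conj_succ_def conj_pred_def bounds
  consider "\<forall>v<n. eps v" "c = Alpha" | "\<forall>v<n. eps v" "c = Beta"
    | "\<forall>v<n. \<not> eps v" "c = Alpha" | "\<forall>v<n. \<not> eps v" "c = Beta"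
    using sign by (cases c) auto
  then show thesis
  proof cases
    case 1
    show thesis
      by (rule that[of "conj_succ n sg \<rho>" "conj_pred n sg \<rho>"])
        (use 1 \<sigma>\<rho> in \<open>auto simp add: conj_perms no_fixpoint face_step_positive[OF bij] unfolds\<close>)
  next
    case 2
    show thesis
      by (rule that[of "conj_pred n \<rho> sg" "conj_succ n \<rho> sg"])
        (use 2 \<rho>\<sigma> in \<open>auto simp add: conj_perms no_fixpoint face_step_positive[OF bij] unfolds\<close>)
  next
    case 3
    show thesis
      by (rule that[of "conj_pred n sg \<rho>" "conj_succ n sg \<rho>"])
        (use 3 \<sigma>\<rho> in \<open>auto simp add: conj_perms no_fixpoint face_step_negative[OF bij] unfolds\<close>)
  next
    case 4
    show thesis
      by (rule that[of "conj_succ n \<rho> sg" "conj_pred n \<rho> sg"])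
        (use 4 \<rho>\<sigma> in \<open>auto simp add: conj_perms no_fixpoint face_step_negative[OF bij] unfolds\<close>)
  qed
qed

lemma opposite_gluing_commutes_reverse:
  fixes F :: "dart \<Rightarrow> dart"
  assumes "odd n" and per: "(F ^^ (2 * n)) y = y"
    and dir: "\<And>i. snd (snd ((F ^^ i) y)) = even i"
    and glued: "\<And>i. i < 2 * n \<Longrightarrow> edge_of ((F ^^ i) y) = edge_of ((F ^^ ((i + n) mod (2 * n))) y)"
  shows "F (reverse_dart ((F ^^ i) y)) = reverse_dart ((F ^^ Suc i) y)"
proof -
  have opposite: "(F ^^ (i + n)) y = reverse_dart ((F ^^ i) y)" for i
  proof -
    define j where "j = i mod (2 * n)"
    have "j < 2 * n" using odd_pos[OF \<open>odd n\<close>] by (simp add: j_def)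
    have "(F ^^ (i + n)) y = (F ^^ ((i + n) mod (2 * n))) y"
      by (rule funpow_mod_eq[OF per, symmetric])
    also have "(i + n) mod (2 * n) = (j + n) mod (2 * n)"
      unfolding j_def by (simp add: mod_add_left_eq)
    finally have i_n: "(F ^^ (i + n)) y = (F ^^ ((j + n) mod (2 * n))) y" .
    have "even ((j + n) mod (2 * n)) \<longleftrightarrow> odd j"
      using \<open>odd n\<close> by (simp add: dvd_mod_iff)
    then have "snd (snd ((F ^^ ((j + n) mod (2 * n))) y)) \<longleftrightarrow> \<not> snd (snd ((F ^^ j) y))"
      by (simp add: dir)
    with glued[OF \<open>j < 2 * n\<close>] have "(F ^^ ((j + n) mod (2 * n))) y = reverse_dart ((F ^^ j) y)"
      by (cases "(F ^^ j) y"; cases "(F ^^ ((j + n) mod (2 * n))) y")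
        (auto simp: edge_of_def reverse_dart_def)
    moreover have "(F ^^ i) y = (F ^^ j) y"
      unfolding j_def by (rule funpow_mod_eq[OF per, symmetric])
    ultimately show ?thesis using i_n by simp
  qed
  show ?thesis
    using opposite[of i] opposite[of "Suc i"] by simp
qed

lemma coherent_imp_constant_sign:
  assumes "coherent n eps"
  shows "(\<forall>v<n. eps v) \<or> (\<forall>v<n. \<not> eps v)"
proof -
  let ?P = "{..<n} \<inter> {v. eps v}" and ?N = "{..<n} \<inter> - {v. eps v}"
  have "card ?P + card ?N = card (?P \<union> ?N)"
    by (rule card_Un_disjoint[symmetric]) auto
  also have "?P \<union> ?N = {..<n}" by auto
  finally have total: "card ?P + card ?N = n" by simp
  have "alg_int n eps = int (card ?P) - int (card ?N)"
    unfolding alg_int_def by (simp add: sum.If_cases)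
  with total assms have "card ?P = 0 \<or> card ?N = 0"
    unfolding coherent_def by linarith
  then show ?thesis by auto
qed

lemma all_glued_imp_twice_face_step_reverse:
  assumes "odd n" "1 < n" and bij: "bij_betw sg {..<n} {..<n}" and face: "single_face n sg eps"
    and sign: "(\<forall>v<n. eps v) \<or> (\<forall>v<n. \<not> eps v)"
    and glued: "\<forall>i < 2 * n. glued_to_opposite n sg eps c i" and "k < n"
  shows "(face_step n sg eps ^^ 2) (c, k, False)
       = reverse_dart ((face_step n sg eps ^^ 2) (c, k, True))"
proof -
  define F where "F = face_step n sg eps ^^ 2"
  define y where "y = (c, 0 :: nat, True)"
  obtain r q where "inverse_perms n r q" "r 0 \<noteq> 0"
    and "\<And>k. k < n \<Longrightarrow> F (c, k, False) = (c, r k, True)"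
    and "\<And>k. k < n \<Longrightarrow> F (c, k, True) = (c, (q (Suc k mod n) + n - 1) mod n, False)"
    using twice_face_step_constant_sign[OF bij \<open>1 < n\<close> sign, where c = c] unfolding F_def by blast
  then have walk: "\<exists>k<n. (F ^^ i) y = (c, k, even i)" for i
  proof (induction i)
    case 0
    show ?case using \<open>1 < n\<close> by (auto simp: y_def)
  next
    case (Suc i)
    then obtain k where "k < n" "(F ^^ i) y = (c, k, even i)" by blast
    then show ?case using Suc.prems by (cases "even i") (auto simp: inverse_perms_def)
  qed
  have y: "y \<in> darts n" using \<open>1 < n\<close> by (simp add: y_def darts_def)
  have F_pow: "F ^^ i = face_step n sg eps ^^ (2 * i)" for i
    unfolding F_def funpow_mult ..
  have per: "(F ^^ (2 * n)) y = y"
    using single_face_funpow_period[OF bij face y] unfolding F_pow by (simp add: mult.assoc)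
  have commute: "F (reverse_dart ((F ^^ i) y)) = reverse_dart ((F ^^ Suc i) y)" for i
  proof (rule opposite_gluing_commutes_reverse[OF \<open>odd n\<close> per])
    show "snd (snd ((F ^^ i) y)) = even i" for i
      using walk[of i] by auto
    show "edge_of ((F ^^ i) y) = edge_of ((F ^^ ((i + n) mod (2 * n))) y)" if "i < 2 * n" for i
      using glued that unfolding glued_to_opposite_def side_def F_pow y_def by blast
  qed
  obtain i where i: "(F ^^ i) y = (c, k, True)"
    using single_face_reaches_same_curve[OF bij face y, of "(c, k, True)"] \<open>k < n\<close>
    unfolding F_pow by (auto simp: y_def darts_def funpow_mult)
  have "F (c, k, False) = F (reverse_dart ((F ^^ i) y))"
    by (simp add: i reverse_dart_def)
  also have "\<dots> = reverse_dart ((F ^^ Suc i) y)"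
    by (rule commute)
  also have "\<dots> = reverse_dart (F (c, k, True))"
    using i by simp
  finally show ?thesis unfolding F_def .
qed

lemma not_all_glued_to_opposite:
  assumes "odd n" "1 < n" and bij: "bij_betw sg {..<n} {..<n}" and face: "single_face n sg eps"
    and sign: "(\<forall>v<n. eps v) \<or> (\<forall>v<n. \<not> eps v)"
  shows "\<exists>i < 2 * n. \<not> glued_to_opposite n sg eps c i"
proof (rule ccontr)
  assume "\<not> ?thesis"
  then have glued: "\<forall>i < 2 * n. glued_to_opposite n sg eps c i" by blast
  have reverse: "(face_step n sg eps ^^ 2) (c, k, False)
      = reverse_dart ((face_step n sg eps ^^ 2) (c, k, True))" if "k < n" for k
    using all_glued_imp_twice_face_step_reverse[OF assms glued that] .
  obtain r q where rq: "inverse_perms n r q" "r 0 \<noteq> 0"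
    and "\<And>k. k < n \<Longrightarrow> (face_step n sg eps ^^ 2) (c, k, False) = (c, r k, True)"
    and "\<And>k. k < n \<Longrightarrow> (face_step n sg eps ^^ 2) (c, k, True) = (c, (q (Suc k mod n) + n - 1) mod n, False)"
    using twice_face_step_constant_sign[OF bij \<open>1 < n\<close> sign, where c = c] by blast
  with reverse have "r k = (q (Suc k mod n) + n - 1) mod n" if "k < n" for k
    using that by (force simp: reverse_dart_def)
  then have "Suc (r k) mod n = q (Suc k mod n)" if "k < n" for k
    using rq(1) that by (simp add: inverse_perms_def)
  then have "r (Suc (r k) mod n) = Suc k mod n" if "k < n" for k
    using rq(1) that by (simp add: inverse_perms_def)
  then have "r 0 = 0"
    using shift_sandwich_imp_id[OF \<open>odd n\<close>] rq(1) \<open>1 < n\<close> by (simp add: inverse_perms_def)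
  with rq(2) show False ..
qed

theorem proposition4:
  fixes g n :: nat and sg :: "nat \<Rightarrow> nat" and eps :: "nat \<Rightarrow> bool"
  assumes "g \<ge> 3"
    and "n = 2 * g - 1"
    and "bij_betw sg {..<n} {..<n}"
    and "single_face n sg eps"
    and "coherent n eps"
  shows "(\<exists>i < 2 * n. \<not> glued_to_opposite n sg eps Alpha i)
       \<and> (\<exists>i < 2 * n. \<not> glued_to_opposite n sg eps Beta i)"
proof -
  have "odd n" "1 < n" using assms(1,2) by auto
  with assms(3,4) coherent_imp_constant_sign[OF assms(5)] show ?thesis
    using not_all_glued_to_opposite by blast
qed

end
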